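(* Let $n\ge 2$, $p>n+1$, and let $h_1,h_2$ be $C^2$ functions on $\{x'\in\mathbb{R}^{n-1}:|x'|<1\}$ satisfying $h_1(0')=h_2(0')=0$, $D_{x'}h_1(0')=D_{x'}h_2(0')=0$, and, for some constants $\kappa_1,\kappa_2>0$, $$\kappa_1 I_{n-1}\le D^2h_1(x')\le\kappa_2 I_{n-1},\qquad \kappa_1 I_{n-1}\le -D^2h_2(x')\le\kappa_2 I_{n-1}\quad\text{for } 0\le|x'|<1.$$ Let $\delta\in(0,p-n-1)$ and $\gamma\in\big(0,\frac{p-n-1-\delta}{p-1}\big)$, and set $v(x)=(|x'|^2+(2+\delta)x_n^2)^{\gamma/2}$. Then there exists $\mu\in(0,1/2)$ depending only on $n,p,\delta,\gamma,\kappa_1,\kappa_2$ and the modulus of continuity of $D^2h_1$ and $D^2h_2$ at $x'=0$, such that for every $\varepsilon\in(0,\mu^2/\kappa_2)$, $$-\operatorname{div}(|Dv|^{p-2}Dv)>0\ \text{ in }\Omega_{\mu/\kappa_2}\setminus\Omega_{\varepsilon/\mu},\qquad \frac{\partial v}{\partial\nu}>0\ \text{ on }(\Gamma_+\cup\Gamma_-)\cap\overline{\Omega}_{\mu/\kappa_2}.$$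
   Context: Points of $\mathbb{R}^n$ are written $x=(x',x_n)$ with $x'\in\mathbb{R}^{n-1}$. For $0<r\le 1$, $\Omega_r:=\{(x',x_n): |x'|<r,\ -\frac{\varepsilon}{2}+h_2(x')<x_n<\frac{\varepsilon}{2}+h_1(x')\}$. $\Gamma_+=\{x_n=\frac{\varepsilon}{2}+h_1(x'),\ |x'|<1\}$ and $\Gamma_-=\{x_n=-\frac{\varepsilon}{2}+h_2(x'),\ |x'|<1\}$. $\nu$ is the unit normal on $\Gamma_+$ pointing upwards (i.e. $\nu=(-D_{x'}h_1,1)/\sqrt{1+|D_{x'}h_1|^2}$) and on $\Gamma_-$ pointing downwards. *)

theory Defs
  imports "HOL-Analysis.Analysis"
begin

text \<open>Points of R^n are pairs (x', x_n) with x' :: real^'m (so n = CARD('m) + 1 >= 2).\<close>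

definition grad :: "('a::euclidean_space \<Rightarrow> real) \<Rightarrow> 'a \<Rightarrow> 'a" where
  "grad f x = (THE g. (f has_derivative (\<lambda>h. g \<bullet> h)) (at x))"

definition divergence :: "('a::euclidean_space \<Rightarrow> 'a) \<Rightarrow> 'a \<Rightarrow> real" where
  "divergence F x = (\<Sum>b\<in>Basis. frechet_derivative F (at x) b \<bullet> b)"

definition p_flux :: "real \<Rightarrow> ('a::euclidean_space \<Rightarrow> real) \<Rightarrow> 'a \<Rightarrow> 'a" where
  "p_flux p v = (\<lambda>x. norm (grad v x) powr (p - 2) *\<^sub>R grad v x)"

definition Omega :: "(real^'m \<Rightarrow> real) \<Rightarrow> (real^'m \<Rightarrow> real) \<Rightarrow> real \<Rightarrow> real \<Rightarrow> ((real^'m) \<times> real) set" where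
  "Omega h1 h2 \<epsilon> r = {(x', t). norm x' < r \<and> - \<epsilon>/2 + h2 x' < t \<and> t < \<epsilon>/2 + h1 x'}"

definition Gamma_plus :: "(real^'m \<Rightarrow> real) \<Rightarrow> real \<Rightarrow> ((real^'m) \<times> real) set" where
  "Gamma_plus h1 \<epsilon> = {(x', t). norm x' < 1 \<and> t = \<epsilon>/2 + h1 x'}"

definition Gamma_minus :: "(real^'m \<Rightarrow> real) \<Rightarrow> real \<Rightarrow> ((real^'m) \<times> real) set" where
  "Gamma_minus h2 \<epsilon> = {(x', t). norm x' < 1 \<and> t = - \<epsilon>/2 + h2 x'}"

definition nu_plus :: "(real^'m \<Rightarrow> real^'m) \<Rightarrow> real^'m \<Rightarrow> (real^'m) \<times> real" where
  "nu_plus Dh1 x' = (1 / sqrt (1 + (norm (Dh1 x'))\<^sup>2)) *\<^sub>R (- Dh1 x', 1)"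

definition nu_minus :: "(real^'m \<Rightarrow> real^'m) \<Rightarrow> real^'m \<Rightarrow> (real^'m) \<times> real" where
  "nu_minus Dh2 x' = (1 / sqrt (1 + (norm (Dh2 x'))\<^sup>2)) *\<^sub>R (Dh2 x', - 1)"

definition C2_ball :: "(real^'m \<Rightarrow> real) \<Rightarrow> (real^'m \<Rightarrow> real^'m) \<Rightarrow> (real^'m \<Rightarrow> real^'m^'m) \<Rightarrow> bool" where
  "C2_ball h Dh H \<longleftrightarrow>
     (\<forall>x\<in>ball 0 1. (h has_derivative (\<lambda>y. Dh x \<bullet> y)) (at x)
                 \<and> (Dh has_derivative (\<lambda>y. H x *v y)) (at x))
     \<and> continuous_on (ball 0 1) H"

end

theory Submission
  imports Defs
begin

(* Write Q(x', x_n) = |x'|^2 + a x_n^2 with a = 2 + \<delta>, so that v = Q^(\<gamma>/2).  A direct computation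
   shows that div(|Dv|^(p-2) Dv) is a positive multiple of a rational function of
   \<tau> = x_n^2 / |x'|^2 whose value at \<tau> = 0 is (n - 1) + a + \<gamma>(p - 1) - p < 0; by continuity
   it stays negative for \<tau> < \<mu>^2, and on the annulus the Taylor bounds |h_i(x')| <= \<kappa>2 |x'|^2/2
   force |x_n| < \<mu> |x'|.  On \<Gamma>_+ the normal derivative has the sign of
   a \<epsilon>/2 + (a h1(x') - x' . Dh1(x')); along the ray through x' both h1(x') and x' . Dh1(x') are
   values of the Hessian form x' . D^2h1 x' (times 1/2 and 1), which by continuity of D^2h1 at 0
   differ from x' . D^2h1(0) x' >= \<kappa>1 |x'|^2 by a small multiple of |x'|^2, so the bracket is
   nonnegative because a > 2.  The surface \<Gamma>_- is the mirror image. *)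

lemma norm_matrix_vector_mult_le:
  fixes A :: "real^'n^'m"
  shows "norm (A *v x) \<le> norm A * norm x"
proof -
  have "norm (A *v x) = L2_set (\<lambda>i. \<bar>A $ i \<bullet> x\<bar>) UNIV"
    by (simp add: norm_vec_def matrix_vector_mult_def inner_vec_def)
  also have "\<dots> \<le> L2_set (\<lambda>i. norm (A $ i) * norm x) UNIV"
    by (intro L2_set_mono) (auto simp: Cauchy_Schwarz_ineq2)
  also have "\<dots> = norm x * L2_set (\<lambda>i. norm (A $ i)) UNIV"
    by (simp add: L2_set_right_distrib mult.commute)
  also have "\<dots> = norm A * norm x"
    by (simp add: norm_vec_def[of A])
  finally show ?thesis .
qed

lemma quadratic_form_le:
  fixes A :: "real^'n^'n"
  shows "\<bar>x \<bullet> (A *v x)\<bar> \<le> norm A * (norm x)\<^sup>2"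
proof -
  have "\<bar>x \<bullet> (A *v x)\<bar> \<le> norm x * norm (A *v x)" by (rule Cauchy_Schwarz_ineq2)
  also have "\<dots> \<le> norm x * (norm A * norm x)"
    by (intro mult_left_mono norm_matrix_vector_mult_le) simp
  finally show ?thesis by (simp add: power2_eq_square mult_ac)
qed

lemma matrix_vector_mult_uminus:
  fixes A :: "'a::ring_1^'n^'m"
  shows "(- A) *v x = - (A *v x)"
  using matrix_vector_mult_diff_rdistrib[of 0 A x] by simp

lemma sum_Basis_prod_real:
  fixes f :: "'a::euclidean_space \<times> 'b::euclidean_space \<Rightarrow> real"
  shows "(\<Sum>b\<in>Basis. f b) = (\<Sum>i\<in>Basis. f (i, 0)) + (\<Sum>j\<in>Basis. f (0, j))"
proof -
  have "inj_on (\<lambda>u. (u::'a, 0::'b)) Basis" "inj_on (\<lambda>u. (0::'a, u::'b)) Basis"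
    by (auto intro!: inj_onI)
  then show ?thesis
    unfolding Basis_prod_def by (subst sum.union_disjoint) (auto simp: sum.reindex)
qed

lemma grad_eqI:
  assumes "(f has_derivative (\<lambda>h. g \<bullet> h)) (at x)"
  shows "grad f x = g"
  unfolding grad_def
proof (rule the_equality)
  fix g' assume "(f has_derivative (\<lambda>h. g' \<bullet> h)) (at x)"
  with assms have "(\<lambda>h. g \<bullet> h) = (\<lambda>h. g' \<bullet> h)" by (rule has_derivative_unique)
  then have "(g - g') \<bullet> (g - g') = 0" by (metis inner_diff_left diff_self)
  then show "g' = g" by simp
qed (fact assms)

lemma divergence_eq_trace:
  assumes "(F has_derivative D) (at z)"
  shows "divergence F z = (\<Sum>b\<in>Basis. D b \<bullet> b)"
  by (simp add: divergence_def frechet_derivative_at[OF assms, symmetric])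

lemma divergence_scaleR_linear:
  fixes \<phi> :: "'a::euclidean_space \<Rightarrow> real" and L :: "'a \<Rightarrow> 'a"
  assumes \<phi>: "(\<phi> has_derivative (\<lambda>h. g \<bullet> h)) (at z)" and L: "linear L"
    and S: "open S" "z \<in> S" and F: "\<And>x. x \<in> S \<Longrightarrow> F x = \<phi> x *\<^sub>R L x"
  shows "F differentiable (at z)"
    and "divergence F z = \<phi> z * (\<Sum>b\<in>Basis. L b \<bullet> b) + g \<bullet> L z"
proof -
  have "((\<lambda>x. \<phi> x *\<^sub>R L x) has_derivative (\<lambda>h. \<phi> z *\<^sub>R L h + (g \<bullet> h) *\<^sub>R L z)) (at z)"
    by (rule has_derivative_scaleR[OF \<phi> linear_imp_has_derivative[OF L]])
  then have dF: "(F has_derivative (\<lambda>h. \<phi> z *\<^sub>R L h + (g \<bullet> h) *\<^sub>R L z)) (at z)"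
    by (rule has_derivative_transform_within_open[OF _ S]) (simp add: F)
  then show "F differentiable (at z)" unfolding differentiable_def by blast
  have "divergence F z = (\<Sum>b\<in>Basis. \<phi> z * (L b \<bullet> b) + (g \<bullet> b) * (L z \<bullet> b))"
    unfolding divergence_eq_trace[OF dF] by (simp add: inner_add_left)
  also have "\<dots> = \<phi> z * (\<Sum>b\<in>Basis. L b \<bullet> b) + g \<bullet> L z"
    unfolding euclidean_inner[of g "L z"] by (simp add: sum.distrib sum_distrib_left)
  finally show "divergence F z = \<phi> z * (\<Sum>b\<in>Basis. L b \<bullet> b) + g \<bullet> L z" .
qed

definition aniso_sq :: "real \<Rightarrow> 'a::real_inner \<times> real \<Rightarrow> real" where
  "aniso_sq a z = fst z \<bullet> fst z + a * (snd z)\<^sup>2"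

definition scale_last :: "real \<Rightarrow> 'a::real_vector \<times> real \<Rightarrow> 'a \<times> real" where
  "scale_last a z = (fst z, a * snd z)"

lemma linear_scale_last: "linear (scale_last a)"
  unfolding scale_last_def by (rule linearI) (auto simp: algebra_simps)

lemma inner_scale_last_self: "scale_last a z \<bullet> scale_last a z = aniso_sq (a\<^sup>2) z"
  by (simp add: scale_last_def aniso_sq_def inner_prod_def power_mult_distrib power2_eq_square)

lemma inner_scale_last_sq: "scale_last (a\<^sup>2) z \<bullet> scale_last a z = fst z \<bullet> fst z + a ^ 3 * (snd z)\<^sup>2"
  by (simp add: scale_last_def inner_prod_def power2_eq_square power3_eq_cube)

lemma trace_scale_last:
  "(\<Sum>b\<in>(Basis :: ('a::euclidean_space \<times> real) set). scale_last a b \<bullet> b) = real DIM('a) + a"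
  by (subst sum_Basis_prod_real) (simp add: scale_last_def inner_prod_def)

lemma aniso_sq_nonneg: "0 \<le> a \<Longrightarrow> 0 \<le> aniso_sq a z"
  unfolding aniso_sq_def by simp

lemma aniso_sq_pos: "fst z \<noteq> 0 \<Longrightarrow> 0 \<le> a \<Longrightarrow> 0 < aniso_sq a z"
  unfolding aniso_sq_def by (simp add: add_pos_nonneg)

lemma has_derivative_aniso_sq:
  "(aniso_sq a has_derivative (\<lambda>h. 2 * (scale_last a z \<bullet> h))) (at z within S)"
  unfolding aniso_sq_def[abs_def] scale_last_def
  by (auto intro!: derivative_eq_intros simp: inner_prod_def algebra_simps inner_commute)

lemma has_derivative_aniso_sq_powr:
  assumes "0 < aniso_sq a z"
  shows "((\<lambda>z. aniso_sq a z powr r) has_derivative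
    (\<lambda>h. ((2 * r * aniso_sq a z powr (r - 1)) *\<^sub>R scale_last a z) \<bullet> h)) (at z)"
  using assms
  by (auto intro!: derivative_eq_intros has_derivative_aniso_sq simp: fun_eq_iff powr_diff field_simps)

lemma grad_aniso_sq_powr:
  assumes "0 < aniso_sq a z"
  shows "grad (\<lambda>z. aniso_sq a z powr r) z = (2 * r * aniso_sq a z powr (r - 1)) *\<^sub>R scale_last a z"
  by (rule grad_eqI[OF has_derivative_aniso_sq_powr[OF assms]])

lemma p_flux_aniso_sq_powr:
  assumes Q: "0 < aniso_sq a z" and "0 < \<gamma>"
  shows "p_flux p (\<lambda>z. aniso_sq a z powr (\<gamma>/2)) z =
    (\<gamma> powr (p - 1) * aniso_sq a z powr ((\<gamma>/2 - 1) * (p - 1)) * aniso_sq (a\<^sup>2) z powr ((p - 2)/2))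
      *\<^sub>R scale_last a z"
proof -
  define e where "e = \<gamma>/2 - 1"
  have grad: "grad (\<lambda>z. aniso_sq a z powr (\<gamma>/2)) z = (\<gamma> * aniso_sq a z powr e) *\<^sub>R scale_last a z"
    using grad_aniso_sq_powr[OF Q, of "\<gamma>/2"] by (simp add: e_def)
  have "norm (scale_last a z) = aniso_sq (a\<^sup>2) z powr (1/2)"
    using aniso_sq_nonneg[of "a\<^sup>2" z]
    by (simp add: norm_eq_sqrt_inner inner_scale_last_self powr_half_sqrt)
  then have "norm ((\<gamma> * aniso_sq a z powr e) *\<^sub>R scale_last a z) powr (p - 2) * (\<gamma> * aniso_sq a z powr e)
      = \<gamma> powr (p - 2) * \<gamma> powr 1 * (aniso_sq a z powr (e * (p - 2)) * aniso_sq a z powr e)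
        * aniso_sq (a\<^sup>2) z powr ((p - 2)/2)"
    using assms by (simp add: powr_mult powr_powr abs_mult)
  also have "\<dots> = \<gamma> powr (p - 1) * aniso_sq a z powr (e * (p - 1)) * aniso_sq (a\<^sup>2) z powr ((p - 2)/2)"
    unfolding powr_add[symmetric] by (simp add: algebra_simps)
  finally show ?thesis
    unfolding p_flux_def grad by (simp add: e_def)
qed

lemma has_derivative_aniso_sq_powr_mult:
  assumes Qa: "0 < aniso_sq a z" and Qb: "0 < aniso_sq b z"
  shows "((\<lambda>x. aniso_sq a x powr \<beta> * aniso_sq b x powr s) has_derivative
    (\<lambda>h. ((aniso_sq a z powr \<beta> * aniso_sq b z powr s) *\<^sub>R
      ((2 * \<beta> / aniso_sq a z) *\<^sub>R scale_last a z + (2 * s / aniso_sq b z) *\<^sub>R scale_last b z)) \<bullet> h)) (at z)"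
proof -
  have "((\<lambda>x. aniso_sq a x powr \<beta> * aniso_sq b x powr s) has_derivative
    (\<lambda>h. aniso_sq a z powr \<beta> * (((2 * s * aniso_sq b z powr (s - 1)) *\<^sub>R scale_last b z) \<bullet> h)
      + (((2 * \<beta> * aniso_sq a z powr (\<beta> - 1)) *\<^sub>R scale_last a z) \<bullet> h) * aniso_sq b z powr s)) (at z)"
    by (intro has_derivative_mult has_derivative_aniso_sq_powr Qa Qb)
  moreover have "aniso_sq a z powr (\<beta> - 1) = aniso_sq a z powr \<beta> / aniso_sq a z"
    "aniso_sq b z powr (s - 1) = aniso_sq b z powr s / aniso_sq b z"
    using Qa Qb by (simp_all add: powr_diff)
  ultimately show ?thesis
    by (elim has_derivative_eq_rhs) (auto simp: fun_eq_iff inner_add_left algebra_simps)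
qed

(* Divergence of the p-flux of aniso_sq a powr (\<gamma>/2), divided by a positive factor, as a
   function of \<tau> = x_n^2 / |x'|^2 (see divergence_p_flux_aniso_sq_powr). *)
definition div_profile :: "real \<Rightarrow> real \<Rightarrow> real \<Rightarrow> real \<Rightarrow> real \<Rightarrow> real" where
  "div_profile n a p \<gamma> \<tau> = n + a + (\<gamma> - 2) * (p - 1) * (1 + a\<^sup>2 * \<tau>) / (1 + a * \<tau>)
     + (p - 2) * (1 + a ^ 3 * \<tau>) / (1 + a\<^sup>2 * \<tau>)"

lemma div_profile_neg_near_zero:
  assumes "div_profile n a p \<gamma> 0 < 0"
  obtains \<eta> where "0 < \<eta>" "\<And>\<tau>. \<bar>\<tau>\<bar> < \<eta> \<Longrightarrow> div_profile n a p \<gamma> \<tau> < 0"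
proof -
  have "isCont (div_profile n a p \<gamma>) 0"
    unfolding div_profile_def by (intro continuous_intros) auto
  then obtain \<eta> where \<eta>: "0 < \<eta>"
    and near: "\<And>\<tau>. dist \<tau> 0 < \<eta> \<Longrightarrow> dist (div_profile n a p \<gamma> \<tau>) (div_profile n a p \<gamma> 0) < - div_profile n a p \<gamma> 0"
    using assms unfolding continuous_at_eps_delta by (meson neg_0_less_iff_less)
  show ?thesis
  proof (rule that[OF \<eta>])
    fix \<tau> :: real assume "\<bar>\<tau>\<bar> < \<eta>"
    then show "div_profile n a p \<gamma> \<tau> < 0"
      using near[of \<tau>] by (simp add: dist_real_def)
  qed
qed

lemma div_profile_homogeneous:
  assumes "0 < R" "0 \<le> a" "0 \<le> T"
  shows "n + a + (\<gamma> - 2) * (p - 1) * (R + a\<^sup>2 * T) / (R + a * T) + (p - 2) * (R + a ^ 3 * T) / (R + a\<^sup>2 * T)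
    = div_profile n a p \<gamma> (T / R)"
proof -
  have ratio: "(R + c * T) / (R + d * T) = (1 + c * (T / R)) / (1 + d * (T / R))" for c d
  proof -
    have "1 + c * (T / R) = (R + c * T) / R" "1 + d * (T / R) = (R + d * T) / R"
      using assms by (simp_all add: field_simps)
    then show ?thesis using assms by simp
  qed
  show ?thesis
    unfolding div_profile_def times_divide_eq_right[symmetric] ratio ..
qed

lemma divergence_p_flux_aniso_sq_powr:
  fixes z :: "'a::euclidean_space \<times> real"
  assumes a: "0 \<le> a" and \<gamma>: "0 < \<gamma>" and x: "fst z \<noteq> 0"
  shows "p_flux p (\<lambda>z. aniso_sq a z powr (\<gamma>/2)) differentiable (at z)"
    and "divergence (p_flux p (\<lambda>z. aniso_sq a z powr (\<gamma>/2))) z =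
      \<gamma> powr (p - 1) * aniso_sq a z powr ((\<gamma>/2 - 1) * (p - 1)) * aniso_sq (a\<^sup>2) z powr ((p - 2)/2)
      * div_profile (DIM('a)) a p \<gamma> ((snd z)\<^sup>2 / (fst z \<bullet> fst z))"
proof -
  define \<beta> s where "\<beta> = (\<gamma>/2 - 1) * (p - 1)" and "s = (p - 2) / 2"
  define \<phi> where "\<phi> x = \<gamma> powr (p - 1) * (aniso_sq a x powr \<beta> * aniso_sq (a\<^sup>2) x powr s)"
    for x :: "'a \<times> real"
  define Q W where "Q = aniso_sq a z" and "W = aniso_sq (a\<^sup>2) z"
  have Q: "0 < Q" and W: "0 < W"
    unfolding Q_def W_def using x a by (simp_all add: aniso_sq_pos)
  define g where "g = \<phi> z *\<^sub>R ((2 * \<beta> / Q) *\<^sub>R scale_last a z + (2 * s / W) *\<^sub>R scale_last (a\<^sup>2) z)"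
  have d\<phi>: "(\<phi> has_derivative (\<lambda>h. g \<bullet> h)) (at z)"
    unfolding \<phi>_def[abs_def] g_def Q_def W_def
    by (rule has_derivative_eq_rhs[OF has_derivative_mult_right[OF has_derivative_aniso_sq_powr_mult]])
      (use Q W in \<open>simp_all add: Q_def W_def fun_eq_iff\<close>)
  have flux: "p_flux p (\<lambda>z. aniso_sq a z powr (\<gamma>/2)) x = \<phi> x *\<^sub>R scale_last a x"
    if "x \<in> {x. 0 < aniso_sq a x}" for x
    using p_flux_aniso_sq_powr[of a x \<gamma> p] that \<gamma> by (simp add: \<phi>_def \<beta>_def s_def mult.assoc)
  have "open {x :: 'a \<times> real. 0 < aniso_sq a x}"
    unfolding aniso_sq_def by (intro open_Collect_less continuous_intros)
  note div = divergence_scaleR_linear[OF d\<phi> linear_scale_last this _ flux]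
  then show "p_flux p (\<lambda>z. aniso_sq a z powr (\<gamma>/2)) differentiable (at z)"
    using Q unfolding Q_def by blast
  have "2 * \<beta> = (\<gamma> - 2) * (p - 1)" "2 * s = p - 2"
    by (simp_all add: \<beta>_def s_def field_simps)
  moreover have "g \<bullet> scale_last a z = \<phi> z * (2 * \<beta> * W / Q + 2 * s * (fst z \<bullet> fst z + a ^ 3 * (snd z)\<^sup>2) / W)"
    by (simp add: g_def inner_scale_last_self inner_scale_last_sq W_def algebra_simps add_divide_distrib)
  ultimately have g_scale_last: "g \<bullet> scale_last a z
      = \<phi> z * ((\<gamma> - 2) * (p - 1) * W / Q + (p - 2) * (fst z \<bullet> fst z + a ^ 3 * (snd z)\<^sup>2) / W)"
    by simp
  have profile: "real DIM('a) + a + ((\<gamma> - 2) * (p - 1) * W / Q + (p - 2) * (fst z \<bullet> fst z + a ^ 3 * (snd z)\<^sup>2) / W)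
      = div_profile (DIM('a)) a p \<gamma> ((snd z)\<^sup>2 / (fst z \<bullet> fst z))"
    unfolding Q_def W_def aniso_sq_def add.assoc[symmetric] using x a by (intro div_profile_homogeneous) auto
  have "divergence (p_flux p (\<lambda>z. aniso_sq a z powr (\<gamma>/2))) z = \<phi> z * (real DIM('a) + a) + g \<bullet> scale_last a z"
    using div(2) Q unfolding Q_def trace_scale_last by blast
  also have "\<dots> = \<phi> z * div_profile (DIM('a)) a p \<gamma> ((snd z)\<^sup>2 / (fst z \<bullet> fst z))"
    unfolding g_scale_last profile[symmetric] by (simp add: distrib_left)
  finally show "divergence (p_flux p (\<lambda>z. aniso_sq a z powr (\<gamma>/2))) z =
      \<gamma> powr (p - 1) * aniso_sq a z powr ((\<gamma>/2 - 1) * (p - 1)) * aniso_sq (a\<^sup>2) z powr ((p - 2)/2)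
      * div_profile (DIM('a)) a p \<gamma> ((snd z)\<^sup>2 / (fst z \<bullet> fst z))"
    by (simp add: \<phi>_def \<beta>_def s_def mult.assoc)
qed

lemma norm_scaleR_le_of_le_one: "0 \<le> s \<Longrightarrow> s \<le> 1 \<Longrightarrow> norm (s *\<^sub>R x) \<le> norm x"
  by (simp add: mult_left_le_one_le)

lemma C2_ball_segment_derivatives:
  fixes h :: "real^'m \<Rightarrow> real"
  assumes C: "C2_ball h Dh H" and x: "norm x < 1" and s: "0 \<le> s" "s \<le> 1"
  shows "((\<lambda>s. h (s *\<^sub>R x)) has_real_derivative Dh (s *\<^sub>R x) \<bullet> x) (at s)"
    and "((\<lambda>s. Dh (s *\<^sub>R x) \<bullet> x) has_real_derivative x \<bullet> (H (s *\<^sub>R x) *v x)) (at s)"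
proof -
  have "norm (s *\<^sub>R x) < 1"
    using norm_scaleR_le_of_le_one[OF s, of x] x by linarith
  then have dh: "(h has_derivative (\<lambda>y. Dh (s *\<^sub>R x) \<bullet> y)) (at (s *\<^sub>R x))"
    and dDh: "(Dh has_derivative (\<lambda>y. H (s *\<^sub>R x) *v y)) (at (s *\<^sub>R x))"
    using C unfolding C2_ball_def by auto
  have seg: "((\<lambda>s. s *\<^sub>R x) has_derivative (\<lambda>u. u *\<^sub>R x)) (at s)"
    by (auto intro!: derivative_eq_intros)
  show "((\<lambda>s. h (s *\<^sub>R x)) has_real_derivative Dh (s *\<^sub>R x) \<bullet> x) (at s)"
    unfolding has_field_derivative_def
    by (rule has_derivative_eq_rhs[OF has_derivative_compose[OF seg dh]]) (simp add: fun_eq_iff)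
  have "((\<lambda>s. Dh (s *\<^sub>R x) \<bullet> x) has_derivative (\<lambda>u. (H (s *\<^sub>R x) *v (u *\<^sub>R x)) \<bullet> x)) (at s)"
    using has_derivative_compose[OF seg dDh] by (auto intro!: derivative_eq_intros)
  then show "((\<lambda>s. Dh (s *\<^sub>R x) \<bullet> x) has_real_derivative x \<bullet> (H (s *\<^sub>R x) *v x)) (at s)"
    unfolding has_field_derivative_def
    by (rule has_derivative_eq_rhs) (simp add: fun_eq_iff matrix_vector_mult_scaleR inner_commute)
qed

lemma C2_ball_taylor:
  fixes h :: "real^'m \<Rightarrow> real"
  assumes C: "C2_ball h Dh H" and "h 0 = 0" "Dh 0 = 0" and x: "norm x < 1"
  obtains s where "0 < s" "s < 1" "h x = x \<bullet> (H (s *\<^sub>R x) *v x) / 2"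
proof -
  define d :: "nat \<Rightarrow> real \<Rightarrow> real" where
    "d k = (if k = 0 then (\<lambda>s. h (s *\<^sub>R x)) else if k = 1 then (\<lambda>s. Dh (s *\<^sub>R x) \<bullet> x)
      else (\<lambda>s. x \<bullet> (H (s *\<^sub>R x) *v x)))" for k
  have "\<forall>k s. k < 2 \<and> 0 \<le> s \<and> s \<le> 1 \<longrightarrow> (d k has_real_derivative d (Suc k) s) (at s)"
    using C2_ball_segment_derivatives[OF C x] by (auto simp: d_def less_2_cases_iff)
  from Maclaurin[OF zero_less_one pos2 refl this]
  obtain s where "0 < s" "s < 1" "d 0 1 = (\<Sum>k<2. d k 0 / fact k) + d 2 s / 2"
    by auto
  then show ?thesis
    using that assms by (simp add: d_def numeral_2_eq_2)
qed

lemma C2_ball_mean_value: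
  fixes h :: "real^'m \<Rightarrow> real"
  assumes C: "C2_ball h Dh H" and "Dh 0 = 0" and x: "norm x < 1"
  obtains s where "0 < s" "s < 1" "Dh x \<bullet> x = x \<bullet> (H (s *\<^sub>R x) *v x)"
proof -
  obtain s where "0 < s" "s < 1"
    "Dh (1 *\<^sub>R x) \<bullet> x - Dh (0 *\<^sub>R x) \<bullet> x = (1 - 0) * (x \<bullet> (H (s *\<^sub>R x) *v x))"
    using MVT2[OF zero_less_one C2_ball_segment_derivatives(2)[OF C x]] by blast
  then show ?thesis
    using that assms by simp
qed

lemma C2_ball_uminus:
  assumes "C2_ball h Dh H"
  shows "C2_ball (\<lambda>x. - h x) (\<lambda>x. - Dh x) (\<lambda>x. - H x)"
  unfolding C2_ball_def
proof (intro conjI ballI)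
  fix x :: "real^'a" assume "x \<in> ball 0 1"
  then have "(h has_derivative (\<lambda>y. Dh x \<bullet> y)) (at x)" "(Dh has_derivative (\<lambda>y. H x *v y)) (at x)"
    using assms unfolding C2_ball_def by auto
  from this[THEN has_derivative_minus]
  show "((\<lambda>x. - h x) has_derivative (\<lambda>y. - Dh x \<bullet> y)) (at x)"
    and "((\<lambda>x. - Dh x) has_derivative (\<lambda>y. - H x *v y)) (at x)"
    by (simp_all add: matrix_vector_mult_uminus)
next
  show "continuous_on (ball 0 1) (\<lambda>x. - H x)"
    using assms unfolding C2_ball_def by (auto intro: continuous_on_minus)
qed

lemma C2_ball_le_of_hessian_le:
  fixes h :: "real^'m \<Rightarrow> real"
  assumes C: "C2_ball h Dh H" and h0: "h 0 = 0" "Dh 0 = 0" and x: "norm x < 1"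
    and hess: "\<And>y. norm y < 1 \<Longrightarrow> x \<bullet> (H y *v x) \<le> K"
  shows "h x \<le> K / 2"
proof -
  obtain s where "0 < s" "s < 1" "h x = x \<bullet> (H (s *\<^sub>R x) *v x) / 2"
    using C2_ball_taylor[OF C h0 x] .
  moreover have "norm (s *\<^sub>R x) \<le> norm x"
    using \<open>0 < s\<close> \<open>s < 1\<close> by (intro norm_scaleR_le_of_le_one) auto
  ultimately show ?thesis
    using hess[of "s *\<^sub>R x"] x by simp
qed

lemma C2_ball_inner_gradient_le:
  fixes h :: "real^'m \<Rightarrow> real"
  assumes C: "C2_ball h Dh H" and h0: "h 0 = 0" "Dh 0 = 0" and x: "norm x < 1"
    and a: "2 \<le> a" and pos: "\<kappa> * (norm x)\<^sup>2 \<le> x \<bullet> (H 0 *v x)"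
    and modulus: "\<forall>y\<in>ball 0 1. norm (H y - H 0) \<le> \<omega> (norm y)"
    and small: "\<And>\<rho>. 0 < \<rho> \<Longrightarrow> \<rho> \<le> norm x \<Longrightarrow> \<omega> \<rho> \<le> c"
    and c: "0 \<le> c" "(a + 2) * c \<le> (a - 2) * \<kappa>"
  shows "Dh x \<bullet> x \<le> a * h x"
proof -
  define q where "q y = x \<bullet> (H y *v x)" for y
  have near: "\<bar>q (s *\<^sub>R x) - q 0\<bar> \<le> c * (norm x)\<^sup>2" if "0 < s" "s < 1" for s
  proof -
    have sx: "norm (s *\<^sub>R x) \<le> norm x"
      using that by (intro norm_scaleR_le_of_le_one) auto
    have "norm (H (s *\<^sub>R x) - H 0) \<le> c"
    proof (cases "x = 0")
      case False
      then have "0 < norm (s *\<^sub>R x)"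
        using that by simp
      moreover have "s *\<^sub>R x \<in> ball 0 1"
        using sx x by simp
      ultimately show ?thesis
        using modulus small[OF _ sx] by fastforce
    qed (use c in simp)
    moreover have "\<bar>q (s *\<^sub>R x) - q 0\<bar> \<le> norm (H (s *\<^sub>R x) - H 0) * (norm x)\<^sup>2"
      using quadratic_form_le[of x "H (s *\<^sub>R x) - H 0"]
      by (simp add: q_def matrix_vector_mult_diff_rdistrib inner_diff_right)
    ultimately show ?thesis
      by (meson mult_right_mono order_trans zero_le_power2)
  qed
  obtain s where s: "0 < s" "s < 1" "h x = q (s *\<^sub>R x) / 2"
    using C2_ball_taylor[OF C h0 x] unfolding q_def .
  obtain s' where s': "0 < s'" "s' < 1" "Dh x \<bullet> x = q (s' *\<^sub>R x)"
    using C2_ball_mean_value[OF C h0(2) x] unfolding q_def .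
  have "(a - 2) * (\<kappa> * (norm x)\<^sup>2) \<le> (a - 2) * q 0"
    using a pos by (intro mult_left_mono) (auto simp: q_def)
  moreover have "a * (q 0 - c * (norm x)\<^sup>2) \<le> a * q (s *\<^sub>R x)"
    using a near[OF s(1,2)] by (intro mult_left_mono) auto
  moreover have "(a + 2) * c * (norm x)\<^sup>2 \<le> (a - 2) * \<kappa> * (norm x)\<^sup>2"
    using c by (intro mult_right_mono) auto
  ultimately show ?thesis
    using near[OF s'(1,2)] unfolding s(3) s'(3) ring_distribs by linarith
qed

lemma grad_aniso_sq_powr_inner_pos:
  assumes a: "0 \<le> a" and r: "0 < r" and c: "0 < c" and pos: "0 < fst z \<bullet> w + a * snd z * t"
  shows "(\<lambda>z. aniso_sq a z powr r) differentiable (at z)"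
    and "0 < grad (\<lambda>z. aniso_sq a z powr r) z \<bullet> (c *\<^sub>R (w, t))"
proof -
  have Q: "0 < aniso_sq a z"
  proof (rule ccontr)
    assume "\<not> 0 < aniso_sq a z"
    moreover have "0 \<le> fst z \<bullet> fst z" "0 \<le> a * (snd z)\<^sup>2"
      using a by simp_all
    ultimately have "fst z \<bullet> fst z = 0" "a * (snd z)\<^sup>2 = 0"
      unfolding aniso_sq_def by linarith+
    then have "fst z = 0" "a * snd z = 0"
      by (simp_all add: power2_eq_square)
    with pos show False by simp
  qed
  then show "(\<lambda>z. aniso_sq a z powr r) differentiable (at z)"
    using has_derivative_aniso_sq_powr unfolding differentiable_def by blast
  have "grad (\<lambda>z. aniso_sq a z powr r) z \<bullet> (c *\<^sub>R (w, t))
      = 2 * r * aniso_sq a z powr (r - 1) * c * (fst z \<bullet> w + a * snd z * t)"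
    unfolding grad_aniso_sq_powr[OF Q] by (simp add: scale_last_def inner_prod_def algebra_simps)
  then show "0 < grad (\<lambda>z. aniso_sq a z powr r) z \<bullet> (c *\<^sub>R (w, t))"
    using Q r c pos by simp
qed

lemma closure_Omega_subset: "closure (Omega h1 h2 \<epsilon> r) \<subseteq> {z. norm (fst z) \<le> r}"
proof (rule closure_minimal)
  show "Omega h1 h2 \<epsilon> r \<subseteq> {z. norm (fst z) \<le> r}"
    by (auto simp: Omega_def)
  show "closed {z :: (real^'m) \<times> real. norm (fst z) \<le> r}"
    by (intro closed_Collect_le continuous_intros)
qed

lemma normal_derivative_pos_Gamma_plus:
  fixes h :: "real^'m \<Rightarrow> real"
  assumes \<delta>: "0 < \<delta>" and \<gamma>: "0 < \<gamma>" and \<kappa>: "0 < \<kappa>" and \<epsilon>: "0 < \<epsilon>"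
    and C: "C2_ball h Dh H" and h0: "h 0 = 0" "Dh 0 = 0"
    and lower: "\<forall>y\<in>ball 0 1. \<forall>\<xi>. \<kappa> * (norm \<xi>)\<^sup>2 \<le> \<xi> \<bullet> (H y *v \<xi>)"
    and modulus: "\<forall>y\<in>ball 0 1. norm (H y - H 0) \<le> \<omega> (norm y)"
    and small: "\<And>\<rho>. 0 < \<rho> \<Longrightarrow> \<rho> \<le> r \<Longrightarrow> \<omega> \<rho> \<le> \<delta> * \<kappa> / (4 + \<delta>)"
    and z: "z \<in> Gamma_plus h \<epsilon>" "norm (fst z) \<le> r"
  shows "(\<lambda>z. aniso_sq (2 + \<delta>) z powr (\<gamma>/2)) differentiable (at z) \<and>
    0 < grad (\<lambda>z. aniso_sq (2 + \<delta>) z powr (\<gamma>/2)) z \<bullet> nu_plus Dh (fst z)"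
proof -
  obtain x where zx: "z = (x, \<epsilon>/2 + h x)" and x: "norm x < 1"
    using z(1) by (auto simp: Gamma_plus_def)
  have euler: "Dh x \<bullet> x \<le> (2 + \<delta>) * h x"
    by (rule C2_ball_inner_gradient_le[OF C h0 x _ _ modulus, where \<kappa> = \<kappa> and c = "\<delta> * \<kappa> / (4 + \<delta>)"])
      (use \<delta> \<kappa> lower small z(2) zx in auto)
  have "fst z \<bullet> - Dh x + (2 + \<delta>) * snd z * 1 = (2 + \<delta>) * (\<epsilon>/2) + ((2 + \<delta>) * h x - Dh x \<bullet> x)"
    by (simp add: zx field_simps inner_commute)
  moreover have "0 < (2 + \<delta>) * (\<epsilon>/2)"
    using \<delta> \<epsilon> by simp
  ultimately have pos: "0 < fst z \<bullet> - Dh x + (2 + \<delta>) * snd z * 1"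
    using euler by linarith
  have "0 < 1 / sqrt (1 + (norm (Dh x))\<^sup>2)"
    by (simp add: add_pos_nonneg)
  from grad_aniso_sq_powr_inner_pos[OF _ _ this pos] \<delta> \<gamma>
  show ?thesis
    unfolding nu_plus_def zx by simp
qed

lemma normal_derivative_pos_Gamma_minus:
  fixes h :: "real^'m \<Rightarrow> real"
  assumes \<delta>: "0 < \<delta>" and \<gamma>: "0 < \<gamma>" and \<kappa>: "0 < \<kappa>" and \<epsilon>: "0 < \<epsilon>"
    and C: "C2_ball h Dh H" and h0: "h 0 = 0" "Dh 0 = 0"
    and concave: "\<forall>y\<in>ball 0 1. \<forall>\<xi>. \<kappa> * (norm \<xi>)\<^sup>2 \<le> - (\<xi> \<bullet> (H y *v \<xi>))"
    and modulus: "\<forall>y\<in>ball 0 1. norm (H y - H 0) \<le> \<omega> (norm y)"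
    and small: "\<And>\<rho>. 0 < \<rho> \<Longrightarrow> \<rho> \<le> r \<Longrightarrow> \<omega> \<rho> \<le> \<delta> * \<kappa> / (4 + \<delta>)"
    and z: "z \<in> Gamma_minus h \<epsilon>" "norm (fst z) \<le> r"
  shows "(\<lambda>z. aniso_sq (2 + \<delta>) z powr (\<gamma>/2)) differentiable (at z) \<and>
    0 < grad (\<lambda>z. aniso_sq (2 + \<delta>) z powr (\<gamma>/2)) z \<bullet> nu_minus Dh (fst z)"
proof -
  obtain x where zx: "z = (x, - \<epsilon>/2 + h x)" and x: "norm x < 1"
    using z(1) by (auto simp: Gamma_minus_def)
  have euler: "(- Dh x) \<bullet> x \<le> (2 + \<delta>) * (- h x)"
    by (rule C2_ball_inner_gradient_le[OF C2_ball_uminus[OF C] _ _ x, where \<kappa> = \<kappa> and \<omega> = \<omega>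
          and c = "\<delta> * \<kappa> / (4 + \<delta>)"])
      (use \<delta> \<kappa> h0 concave modulus small z(2) zx in \<open>auto simp: matrix_vector_mult_uminus norm_minus_commute\<close>)
  have "fst z \<bullet> Dh x + (2 + \<delta>) * snd z * - 1 = (2 + \<delta>) * (\<epsilon>/2) + ((2 + \<delta>) * (- h x) - (- Dh x) \<bullet> x)"
    by (simp add: zx field_simps inner_commute)
  moreover have "0 < (2 + \<delta>) * (\<epsilon>/2)"
    using \<delta> \<epsilon> by simp
  ultimately have pos: "0 < fst z \<bullet> Dh x + (2 + \<delta>) * snd z * - 1"
    using euler by linarith
  have "0 < 1 / sqrt (1 + (norm (Dh x))\<^sup>2)"
    by (simp add: add_pos_nonneg)
  from grad_aniso_sq_powr_inner_pos[OF _ _ this pos] \<delta> \<gamma>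
  show ?thesis
    unfolding nu_minus_def zx by simp
qed

lemma Omega_annulus_in_cone:
  fixes h1 h2 :: "real^'m \<Rightarrow> real"
  assumes \<kappa>: "0 < \<kappa>" and \<mu>: "0 < \<mu>" "\<mu> \<le> \<kappa>"
    and C1: "C2_ball h1 Dh1 H1" and C2: "C2_ball h2 Dh2 H2"
    and h0: "h1 0 = 0" "Dh1 0 = 0" "h2 0 = 0" "Dh2 0 = 0"
    and upper: "\<forall>y\<in>ball 0 1. \<forall>\<xi>.
      \<xi> \<bullet> (H1 y *v \<xi>) \<le> \<kappa> * (norm \<xi>)\<^sup>2 \<and> - (\<xi> \<bullet> (H2 y *v \<xi>)) \<le> \<kappa> * (norm \<xi>)\<^sup>2"
    and \<epsilon>: "0 < \<epsilon>" and z: "z \<in> Omega h1 h2 \<epsilon> (\<mu> / \<kappa>) - Omega h1 h2 \<epsilon> (\<epsilon> / \<mu>)"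
  shows "fst z \<noteq> 0" and "(snd z)\<^sup>2 < \<mu>\<^sup>2 * (fst z \<bullet> fst z)"
proof -
  obtain x t where zx: "z = (x, t)"
    by fastforce
  with z have x: "norm x < \<mu> / \<kappa>" and t: "- \<epsilon>/2 + h2 x < t" "t < \<epsilon>/2 + h1 x"
    and "\<epsilon> / \<mu> \<le> norm x"
    by (auto simp: Omega_def)
  then have \<epsilon>x: "\<epsilon> \<le> \<mu> * norm x"
    using \<mu> by (simp add: pos_divide_le_eq mult.commute)
  then have x0: "x \<noteq> 0"
    using \<epsilon> by auto
  then show "fst z \<noteq> 0"
    by (simp add: zx)
  have "\<mu> / \<kappa> \<le> 1"
    using \<mu> \<kappa> by simp
  then have x1: "norm x < 1"
    using x by linarith
  have "h1 x \<le> \<kappa> * (norm x)\<^sup>2 / 2"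
    by (rule C2_ball_le_of_hessian_le[OF C1 h0(1,2) x1]) (use upper in simp)
  moreover have "- h2 x \<le> \<kappa> * (norm x)\<^sup>2 / 2"
    by (rule C2_ball_le_of_hessian_le[OF C2_ball_uminus[OF C2] _ _ x1])
      (use h0 upper in \<open>auto simp: matrix_vector_mult_uminus\<close>)
  moreover have "\<kappa> * (norm x)\<^sup>2 < \<mu> * norm x"
  proof -
    have "\<kappa> * norm x < \<mu>"
      using x \<kappa> by (simp add: pos_less_divide_eq mult.commute)
    then have "(\<kappa> * norm x) * norm x < \<mu> * norm x"
      using x0 by (intro mult_strict_right_mono) auto
    then show ?thesis
      by (simp add: power2_eq_square mult.assoc)
  qed
  ultimately have "\<bar>t\<bar> < \<mu> * norm x"
    using t \<epsilon>x by linarith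
  then have "\<bar>t\<bar>\<^sup>2 < (\<mu> * norm x)\<^sup>2"
    by (intro power_strict_mono) auto
  then show "(snd z)\<^sup>2 < \<mu>\<^sup>2 * (fst z \<bullet> fst z)"
    by (simp add: zx power_mult_distrib power2_norm_eq_inner)
qed

lemma neg_divergence_Omega_annulus:
  fixes h1 h2 :: "real^'m \<Rightarrow> real"
  assumes a: "0 \<le> a" and \<gamma>: "0 < \<gamma>" and \<kappa>: "0 < \<kappa>" and \<mu>: "0 < \<mu>" "\<mu> \<le> \<kappa>"
    and profile: "\<And>\<tau>. 0 \<le> \<tau> \<Longrightarrow> \<tau> < \<mu>\<^sup>2 \<Longrightarrow> div_profile CARD('m) a p \<gamma> \<tau> < 0"
    and C1: "C2_ball h1 Dh1 H1" and C2: "C2_ball h2 Dh2 H2"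
    and h0: "h1 0 = 0" "Dh1 0 = 0" "h2 0 = 0" "Dh2 0 = 0"
    and upper: "\<forall>y\<in>ball 0 1. \<forall>\<xi>.
      \<xi> \<bullet> (H1 y *v \<xi>) \<le> \<kappa> * (norm \<xi>)\<^sup>2 \<and> - (\<xi> \<bullet> (H2 y *v \<xi>)) \<le> \<kappa> * (norm \<xi>)\<^sup>2"
    and \<epsilon>: "0 < \<epsilon>" and z: "z \<in> Omega h1 h2 \<epsilon> (\<mu> / \<kappa>) - Omega h1 h2 \<epsilon> (\<epsilon> / \<mu>)"
  shows "p_flux p (\<lambda>z. aniso_sq a z powr (\<gamma>/2)) differentiable (at z) \<and>
    0 < - divergence (p_flux p (\<lambda>z. aniso_sq a z powr (\<gamma>/2))) z"
proof -
  have x0: "fst z \<noteq> 0" and cone: "(snd z)\<^sup>2 < \<mu>\<^sup>2 * (fst z \<bullet> fst z)"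
    using Omega_annulus_in_cone[OF \<kappa> \<mu> C1 C2 h0 upper \<epsilon> z] by blast+
  then have "div_profile CARD('m) a p \<gamma> ((snd z)\<^sup>2 / (fst z \<bullet> fst z)) < 0"
    by (intro profile) (simp_all add: pos_divide_less_eq)
  moreover have "0 < \<gamma> powr (p - 1) * aniso_sq a z powr ((\<gamma>/2 - 1) * (p - 1)) * aniso_sq (a\<^sup>2) z powr ((p - 2)/2)"
    using \<gamma> a x0 aniso_sq_pos[of z a] aniso_sq_pos[of z "a\<^sup>2"] by simp
  ultimately show ?thesis
    using divergence_p_flux_aniso_sq_powr[OF a \<gamma> x0, of p] by (simp add: mult_pos_neg)
qed

lemma small_radius_exists:
  fixes \<omega> :: "real \<Rightarrow> real" and c \<kappa> :: real
  assumes profile0: "div_profile n a p \<gamma> 0 < 0" and \<omega>: "(\<omega> \<longlongrightarrow> 0) (at_right 0)"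
    and c: "0 < c" and \<kappa>: "0 < \<kappa>"
  obtains \<mu> where "0 < \<mu>" "\<mu> < 1/2" "\<mu> \<le> \<kappa>"
    "\<And>\<tau>. 0 \<le> \<tau> \<Longrightarrow> \<tau> < \<mu>\<^sup>2 \<Longrightarrow> div_profile n a p \<gamma> \<tau> < 0"
    "\<And>\<rho>. 0 < \<rho> \<Longrightarrow> \<rho> \<le> \<mu> / \<kappa> \<Longrightarrow> \<omega> \<rho> \<le> c"
proof -
  obtain \<eta> where \<eta>: "0 < \<eta>" and near: "\<And>\<tau>. \<bar>\<tau>\<bar> < \<eta> \<Longrightarrow> div_profile n a p \<gamma> \<tau> < 0"
    using div_profile_neg_near_zero[OF profile0] by blast
  obtain b where b: "0 < b" "\<And>\<rho>. 0 < \<rho> \<Longrightarrow> \<rho> < b \<Longrightarrow> \<omega> \<rho> < c"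
    using order_tendstoD(2)[OF \<omega> c] unfolding eventually_at_right[OF zero_less_one] by blast
  define \<mu> where "\<mu> = min (1/4) (min (\<kappa> * min b 1 / 2) \<eta>)"
  have \<mu>_le: "\<mu> \<le> 1/4" "\<mu> \<le> \<kappa> * min b 1 / 2" "\<mu> \<le> \<eta>"
    by (simp_all add: \<mu>_def)
  have \<mu>: "0 < \<mu>"
    using \<kappa> b(1) \<eta> by (simp add: \<mu>_def)
  have "\<kappa> * min b 1 \<le> \<kappa> * b" "\<kappa> * min b 1 \<le> \<kappa> * 1" "0 < \<kappa> * b"
    using \<kappa> b(1) by (auto intro: mult_left_mono)
  then have \<mu>\<kappa>: "\<mu> \<le> \<kappa>" "\<mu> < \<kappa> * b"
    using \<mu>_le(2) \<mu> by linarith+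
  have "\<mu>\<^sup>2 \<le> \<mu> * (1/4)"
    using \<mu> \<mu>_le(1) unfolding power2_eq_square by (intro mult_left_mono) auto
  show ?thesis
  proof (rule that)
    show "0 < \<mu>" "\<mu> < 1/2" "\<mu> \<le> \<kappa>"
      using \<mu> \<mu>_le(1) \<mu>\<kappa>(1) by simp_all
  next
    fix \<tau> :: real assume "0 \<le> \<tau>" "\<tau> < \<mu>\<^sup>2"
    then show "div_profile n a p \<gamma> \<tau> < 0"
      using near[of \<tau>] \<open>\<mu>\<^sup>2 \<le> \<mu> * (1/4)\<close> \<mu> \<mu>_le(3) by simp
  next
    fix \<rho> :: real assume "0 < \<rho>" "\<rho> \<le> \<mu> / \<kappa>"
    moreover have "\<mu> / \<kappa> < b"
      using \<mu>\<kappa>(2) \<kappa> by (simp add: pos_divide_less_eq mult.commute)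
    ultimately show "\<omega> \<rho> \<le> c"
      using b(2)[of \<rho>] by simp
  qed
qed

lemma barrier_conditions:
  fixes h1 h2 :: "real^'m \<Rightarrow> real"
  assumes \<delta>: "0 < \<delta>" and \<gamma>: "0 < \<gamma>" and \<kappa>1: "0 < \<kappa>1" and \<kappa>2: "0 < \<kappa>2"
    and \<mu>: "0 < \<mu>" "\<mu> \<le> \<kappa>2"
    and profile: "\<And>\<tau>. 0 \<le> \<tau> \<Longrightarrow> \<tau> < \<mu>\<^sup>2 \<Longrightarrow> div_profile CARD('m) (2 + \<delta>) p \<gamma> \<tau> < 0"
    and small: "\<And>\<rho>. 0 < \<rho> \<Longrightarrow> \<rho> \<le> \<mu> / \<kappa>2 \<Longrightarrow> \<omega> \<rho> \<le> \<delta> * \<kappa>1 / (4 + \<delta>)"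
    and C1: "C2_ball h1 Dh1 H1" and C2: "C2_ball h2 Dh2 H2"
    and h0: "h1 0 = 0" "h2 0 = 0" "Dh1 0 = 0" "Dh2 0 = 0"
    and hess: "\<forall>x'\<in>ball 0 1. \<forall>\<xi>.
      \<kappa>1 * (norm \<xi>)\<^sup>2 \<le> \<xi> \<bullet> (H1 x' *v \<xi>) \<and> \<xi> \<bullet> (H1 x' *v \<xi>) \<le> \<kappa>2 * (norm \<xi>)\<^sup>2 \<and>
      \<kappa>1 * (norm \<xi>)\<^sup>2 \<le> - (\<xi> \<bullet> (H2 x' *v \<xi>)) \<and> - (\<xi> \<bullet> (H2 x' *v \<xi>)) \<le> \<kappa>2 * (norm \<xi>)\<^sup>2"
    and modulus: "\<forall>x'\<in>ball 0 1. norm (H1 x' - H1 0) \<le> \<omega> (norm x') \<and> norm (H2 x' - H2 0) \<le> \<omega> (norm x')"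
    and \<epsilon>: "0 < \<epsilon>"
  defines "v \<equiv> \<lambda>z :: (real^'m) \<times> real. aniso_sq (2 + \<delta>) z powr (\<gamma> / 2)"
  shows "(\<forall>z \<in> Omega h1 h2 \<epsilon> (\<mu> / \<kappa>2) - Omega h1 h2 \<epsilon> (\<epsilon> / \<mu>).
        p_flux p v differentiable (at z) \<and> - divergence (p_flux p v) z > 0) \<and>
    (\<forall>z \<in> Gamma_plus h1 \<epsilon> \<inter> closure (Omega h1 h2 \<epsilon> (\<mu> / \<kappa>2)).
        v differentiable (at z) \<and> grad v z \<bullet> nu_plus Dh1 (fst z) > 0) \<and>
    (\<forall>z \<in> Gamma_minus h2 \<epsilon> \<inter> closure (Omega h1 h2 \<epsilon> (\<mu> / \<kappa>2)).
        v differentiable (at z) \<and> grad v z \<bullet> nu_minus Dh2 (fst z) > 0)"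
proof -
  have in_closure: "norm (fst z) \<le> \<mu> / \<kappa>2" if "z \<in> closure (Omega h1 h2 \<epsilon> (\<mu> / \<kappa>2))" for z
    using closure_Omega_subset that by blast
  have "\<forall>z \<in> Omega h1 h2 \<epsilon> (\<mu> / \<kappa>2) - Omega h1 h2 \<epsilon> (\<epsilon> / \<mu>).
      p_flux p v differentiable (at z) \<and> 0 < - divergence (p_flux p v) z"
  proof
    fix z assume "z \<in> Omega h1 h2 \<epsilon> (\<mu> / \<kappa>2) - Omega h1 h2 \<epsilon> (\<epsilon> / \<mu>)"
    then show "p_flux p v differentiable (at z) \<and> 0 < - divergence (p_flux p v) z"
      unfolding v_def
      by (intro neg_divergence_Omega_annulus[OF _ \<gamma> \<kappa>2 \<mu> profile C1 C2 h0(1,3,2,4)])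
        (use \<delta> \<epsilon> hess in auto)
  qed
  moreover have "\<forall>z \<in> Gamma_plus h1 \<epsilon> \<inter> closure (Omega h1 h2 \<epsilon> (\<mu> / \<kappa>2)).
      v differentiable (at z) \<and> 0 < grad v z \<bullet> nu_plus Dh1 (fst z)"
  proof
    fix z assume "z \<in> Gamma_plus h1 \<epsilon> \<inter> closure (Omega h1 h2 \<epsilon> (\<mu> / \<kappa>2))"
    then show "v differentiable (at z) \<and> 0 < grad v z \<bullet> nu_plus Dh1 (fst z)"
      unfolding v_def
      by (intro normal_derivative_pos_Gamma_plus[OF \<delta> \<gamma> \<kappa>1 \<epsilon> C1 h0(1,3) _ _ small])
        (use hess modulus in_closure[of z] in auto)
  qed
  moreover have "\<forall>z \<in> Gamma_minus h2 \<epsilon> \<inter> closure (Omega h1 h2 \<epsilon> (\<mu> / \<kappa>2)).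
      v differentiable (at z) \<and> 0 < grad v z \<bullet> nu_minus Dh2 (fst z)"
  proof
    fix z assume "z \<in> Gamma_minus h2 \<epsilon> \<inter> closure (Omega h1 h2 \<epsilon> (\<mu> / \<kappa>2))"
    then show "v differentiable (at z) \<and> 0 < grad v z \<bullet> nu_minus Dh2 (fst z)"
      unfolding v_def
      by (intro normal_derivative_pos_Gamma_minus[OF \<delta> \<gamma> \<kappa>1 \<epsilon> C2 h0(2,4) _ _ small])
        (use hess modulus in_closure[of z] in auto)
  qed
  ultimately show ?thesis
    by blast
qed

theorem lemma4p1:
  fixes p \<delta> \<gamma> \<kappa>1 \<kappa>2 :: real and \<omega> :: "real \<Rightarrow> real"
  assumes "p > real CARD('m) + 2"
    and "0 < \<delta>" "\<delta> < p - real CARD('m) - 2"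
    and "0 < \<gamma>" "\<gamma> < (p - real CARD('m) - 2 - \<delta>) / (p - 1)"
    and "0 < \<kappa>1" "0 < \<kappa>2"
    and "(\<omega> \<longlongrightarrow> 0) (at_right 0)"
  shows "\<exists>\<mu>. 0 < \<mu> \<and> \<mu> < 1/2 \<and>
    (\<forall>(h1 :: real^'m \<Rightarrow> real) h2 Dh1 Dh2 H1 H2.
      C2_ball h1 Dh1 H1 \<and> C2_ball h2 Dh2 H2 \<and>
      h1 0 = 0 \<and> h2 0 = 0 \<and> Dh1 0 = 0 \<and> Dh2 0 = 0 \<and>
      (\<forall>x'\<in>ball 0 1. \<forall>\<xi>.
          \<kappa>1 * (norm \<xi>)\<^sup>2 \<le> \<xi> \<bullet> (H1 x' *v \<xi>) \<and> \<xi> \<bullet> (H1 x' *v \<xi>) \<le> \<kappa>2 * (norm \<xi>)\<^sup>2 \<and>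
          \<kappa>1 * (norm \<xi>)\<^sup>2 \<le> - (\<xi> \<bullet> (H2 x' *v \<xi>)) \<and> - (\<xi> \<bullet> (H2 x' *v \<xi>)) \<le> \<kappa>2 * (norm \<xi>)\<^sup>2) \<and>
      (\<forall>x'\<in>ball 0 1. norm (H1 x' - H1 0) \<le> \<omega> (norm x') \<and> norm (H2 x' - H2 0) \<le> \<omega> (norm x'))
      \<longrightarrow>
      (\<forall>\<epsilon>. 0 < \<epsilon> \<and> \<epsilon> < \<mu>\<^sup>2 / \<kappa>2 \<longrightarrow>
        (let v = (\<lambda>z :: (real^'m) \<times> real. ((norm (fst z))\<^sup>2 + (2 + \<delta>) * (snd z)\<^sup>2) powr (\<gamma> / 2)) in
          (\<forall>z \<in> Omega h1 h2 \<epsilon> (\<mu> / \<kappa>2) - Omega h1 h2 \<epsilon> (\<epsilon> / \<mu>).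
              p_flux p v differentiable (at z) \<and> - divergence (p_flux p v) z > 0) \<and>
          (\<forall>z \<in> Gamma_plus h1 \<epsilon> \<inter> closure (Omega h1 h2 \<epsilon> (\<mu> / \<kappa>2)).
              v differentiable (at z) \<and> grad v z \<bullet> nu_plus Dh1 (fst z) > 0) \<and>
          (\<forall>z \<in> Gamma_minus h2 \<epsilon> \<inter> closure (Omega h1 h2 \<epsilon> (\<mu> / \<kappa>2)).
              v differentiable (at z) \<and> grad v z \<bullet> nu_minus Dh2 (fst z) > 0))))"
proof -
  have "\<gamma> * (p - 1) < p - real CARD('m) - 2 - \<delta>"
    using assms(1,5) by (simp add: pos_less_divide_eq)
  then have profile0: "div_profile CARD('m) (2 + \<delta>) p \<gamma> 0 < 0"
    by (simp add: div_profile_def algebra_simps)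
  have c: "0 < \<delta> * \<kappa>1 / (4 + \<delta>)"
    using assms(2,6) by simp
  obtain \<mu> where \<mu>: "0 < \<mu>" "\<mu> < 1/2" "\<mu> \<le> \<kappa>2"
    and profile: "\<And>\<tau>. 0 \<le> \<tau> \<Longrightarrow> \<tau> < \<mu>\<^sup>2 \<Longrightarrow> div_profile CARD('m) (2 + \<delta>) p \<gamma> \<tau> < 0"
    and small: "\<And>\<rho>. 0 < \<rho> \<Longrightarrow> \<rho> \<le> \<mu> / \<kappa>2 \<Longrightarrow> \<omega> \<rho> \<le> \<delta> * \<kappa>1 / (4 + \<delta>)"
    using small_radius_exists[OF profile0 assms(8) c assms(7)] by blast
  have v: "(\<lambda>z :: (real^'m) \<times> real. ((norm (fst z))\<^sup>2 + (2 + \<delta>) * (snd z)\<^sup>2) powr (\<gamma> / 2))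
      = (\<lambda>z. aniso_sq (2 + \<delta>) z powr (\<gamma> / 2))"
    by (simp add: aniso_sq_def power2_norm_eq_inner)
  show ?thesis
    unfolding Let_def v
    by (intro exI[of _ \<mu>] conjI[OF \<mu>(1)] conjI[OF \<mu>(2)] allI impI, elim conjE,
        rule barrier_conditions[OF assms(2,4,6,7) \<mu>(1,3) profile small]) assumption+
qed

end
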